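(* Let $G$ be a supergraceful graph with $p$ nodes and $q$ edges having a total labeling $\varphi$ with $1 \in N(\varphi)$. Then for each integer $t \ge 0$ there exists a supergraceful graph with $p+t$ nodes and $q+t$ edges.
   Context: Graphs are finite, simple. For a labeling $\varphi: V(G) \to \mathbb{Z}_{>0}$ let $N(\varphi) = \{\varphi(x) : x \in V(G)\}$ and $E(\varphi) = \{|\varphi(x)-\varphi(y)| : xy \in E(G)\}$. A total labeling of a graph with $p$ nodes and $q$ edges is a map $\varphi$ such that the $p$ node labels and the $q$ edge labels are pairwise distinct and $N(\varphi) \cup E(\varphi) = \{1,\dots,p+q\}$; a graph is supergraceful if it admits a total labeling. *)

theory Defs
  imports Main
begin

definition simple_graph :: "'a set \<Rightarrow> 'a set set \<Rightarrow> bool" where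
  "simple_graph V E \<longleftrightarrow> finite V \<and>
     (\<forall>e\<in>E. \<exists>x y. x \<in> V \<and> y \<in> V \<and> x \<noteq> y \<and> e = {x, y})"

definition node_labels :: "'a set \<Rightarrow> ('a \<Rightarrow> int) \<Rightarrow> int set" where
  "node_labels V \<phi> = \<phi> ` V"

definition edge_labels :: "'a set set \<Rightarrow> ('a \<Rightarrow> int) \<Rightarrow> int set" where
  "edge_labels E \<phi> = {\<bar>\<phi> x - \<phi> y\<bar> | x y. {x, y} \<in> E}"

text \<open>Positivity of labels follows from the last condition.\<close>
definition total_labeling :: "'a set \<Rightarrow> 'a set set \<Rightarrow> ('a \<Rightarrow> int) \<Rightarrow> bool" where
  "total_labeling V E \<phi> \<longleftrightarrow>
     (\<forall>x\<in>V. \<phi> x > 0) \<and>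
     inj_on \<phi> V \<and>
     card (edge_labels E \<phi>) = card E \<and>
     node_labels V \<phi> \<inter> edge_labels E \<phi> = {} \<and>
     node_labels V \<phi> \<union> edge_labels E \<phi> = {1 .. int (card V + card E)}"

definition supergraceful :: "'a set \<Rightarrow> 'a set set \<Rightarrow> bool" where
  "supergraceful V E \<longleftrightarrow> simple_graph V E \<and> (\<exists>\<phi>. total_labeling V E \<phi>)"

end

theory Submission
  imports Defs
begin

text \<open>If the labels of a totally labelled graph fill \<open>{1..n}\<close> and some node carries label 1,
  attach a new pendant node labelled \<open>n + 2\<close> to that node: the new edge gets label \<open>n + 1\<close>, so the
  labels fill \<open>{1..n + 2}\<close> and the step can be repeated \<open>t\<close> times. Renaming every node by its
  label first puts the graph on natural numbers, where fresh nodes are always available.\<close>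

lemma simple_graph_edges_subset_Pow: "simple_graph V E \<Longrightarrow> E \<subseteq> Pow V"
  unfolding simple_graph_def by auto

lemma simple_graph_finite_edges:
  assumes "simple_graph V E"
  shows "finite E"
proof (rule finite_subset)
  show "E \<subseteq> Pow V"
    using assms by (rule simple_graph_edges_subset_Pow)
  show "finite (Pow V)"
    using assms unfolding simple_graph_def by simp
qed

lemma simple_graph_image:
  assumes "simple_graph V E" and "inj_on f V"
  shows "simple_graph (f ` V) (image f ` E)"
  using assms unfolding simple_graph_def inj_on_def by fastforce

lemma simple_graph_add_edge:
  assumes "simple_graph V E" and "v \<in> V" and "w \<notin> V"
  shows "simple_graph (insert w V) (insert {v, w} E)"
  using assms unfolding simple_graph_def by blast

lemma edge_labels_image:
  assumes "simple_graph V E" and "\<forall>x\<in>V. \<psi> (f x) = \<phi> x"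
  shows "edge_labels (image f ` E) \<psi> = edge_labels E \<phi>"
proof (intro set_eqI iffI)
  fix z assume "z \<in> edge_labels (image f ` E) \<psi>"
  then obtain a b e where "z = \<bar>\<psi> a - \<psi> b\<bar>" and "e \<in> E" and ab: "{a, b} = f ` e"
    unfolding edge_labels_def by blast
  moreover obtain x y where "x \<in> V" "y \<in> V" "e = {x, y}"
    using assms(1) \<open>e \<in> E\<close> unfolding simple_graph_def by blast
  moreover have "\<bar>\<psi> a - \<psi> b\<bar> = \<bar>\<psi> (f x) - \<psi> (f y)\<bar>"
    using ab \<open>e = {x, y}\<close> by (auto simp: doubleton_eq_iff abs_minus_commute)
  ultimately show "z \<in> edge_labels E \<phi>"
    using assms(2) unfolding edge_labels_def by auto
next
  fix z assume "z \<in> edge_labels E \<phi>"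
  then obtain x y where "z = \<bar>\<phi> x - \<phi> y\<bar>" and "{x, y} \<in> E"
    unfolding edge_labels_def by blast
  moreover have "x \<in> V" "y \<in> V"
    using \<open>{x, y} \<in> E\<close> simple_graph_edges_subset_Pow[OF assms(1)] by auto
  ultimately have "z = \<bar>\<psi> (f x) - \<psi> (f y)\<bar>"
    using assms(2) by simp
  moreover have "f ` {x, y} \<in> image f ` E"
    using \<open>{x, y} \<in> E\<close> by (rule imageI)
  ultimately show "z \<in> edge_labels (image f ` E) \<psi>"
    unfolding edge_labels_def by auto
qed

lemma edge_labels_cong:
  assumes "simple_graph V E" and "\<forall>x\<in>V. \<psi> x = \<phi> x"
  shows "edge_labels E \<psi> = edge_labels E \<phi>"
  using edge_labels_image[where f = id] assms by simp

lemma edge_labels_insert: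
  "edge_labels (insert {a, b} E) \<phi> = insert \<bar>\<phi> a - \<phi> b\<bar> (edge_labels E \<phi>)"
  unfolding edge_labels_def by (auto simp: doubleton_eq_iff abs_minus_commute)

lemma total_labeling_labels_bounded:
  assumes "total_labeling V E \<phi>"
  shows "node_labels V \<phi> \<subseteq> {1 .. int (card V + card E)}"
    and "edge_labels E \<phi> \<subseteq> {1 .. int (card V + card E)}"
  using assms unfolding total_labeling_def by auto

lemma inj_on_fun_upd_insert:
  assumes "inj_on \<phi> V" and "c \<notin> \<phi> ` V" and "w \<notin> V"
  shows "inj_on (\<phi>(w := c)) (insert w V)"
  using assms unfolding inj_on_def by (auto split: if_splits)

lemma node_labels_insert_fresh:
  assumes "w \<notin> V"
  shows "node_labels (insert w V) (\<phi>(w := c)) = insert c (node_labels V \<phi>)"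
proof -
  have "(\<phi>(w := c)) ` V = \<phi> ` V"
    by (rule image_cong[OF refl]) (use assms in auto)
  then show ?thesis
    by (simp only: node_labels_def image_insert fun_upd_same)
qed

lemma edge_labels_add_pendant_edge:
  assumes "simple_graph V E" and "v \<in> V" and "w \<notin> V"
  shows "edge_labels (insert {v, w} E) (\<phi>(w := c)) = insert \<bar>\<phi> v - c\<bar> (edge_labels E \<phi>)"
proof -
  have "edge_labels E (\<phi>(w := c)) = edge_labels E \<phi>"
    using assms(1) by (rule edge_labels_cong) (use assms(3) in auto)
  moreover have "v \<noteq> w"
    using assms(2,3) by blast
  ultimately show ?thesis
    unfolding edge_labels_insert by simp
qed

lemma total_labeling_image:
  assumes sg: "simple_graph V E" and inj: "inj_on f V"
    and agree: "\<forall>x\<in>V. \<psi> (f x) = \<phi> x" and tl: "total_labeling V E \<phi>"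
  shows "total_labeling (f ` V) (image f ` E) \<psi>"
proof -
  have "card (f ` V) = card V"
    using inj by (rule card_image)
  moreover have "card (image f ` E) = card E"
    using inj_on_subset[OF inj_on_image_Pow[OF inj] simple_graph_edges_subset_Pow[OF sg]]
    by (rule card_image)
  moreover have "node_labels (f ` V) \<psi> = node_labels V \<phi>"
    using agree unfolding node_labels_def by force
  moreover have "inj_on \<psi> (f ` V)"
    using tl agree unfolding total_labeling_def inj_on_def by auto
  moreover have "\<forall>y\<in>f ` V. \<psi> y > 0"
    using tl agree unfolding total_labeling_def by auto
  moreover have "edge_labels (image f ` E) \<psi> = edge_labels E \<phi>"
    using sg agree by (rule edge_labels_image)
  ultimately show ?thesis
    using tl unfolding total_labeling_def by simp
qed

lemma total_labeling_add_pendant_edge: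
  assumes sg: "simple_graph V E" and tl: "total_labeling V E \<phi>"
    and "v \<in> V" and "\<phi> v = 1" and "w \<notin> V"
  defines "n \<equiv> int (card V + card E)"
  shows "total_labeling (insert w V) (insert {v, w} E) (\<phi>(w := n + 2))"
proof -
  let ?\<phi>' = "\<phi>(w := n + 2)"
  have "n \<ge> 0"
    unfolding n_def by simp
  have agree: "\<forall>x\<in>V. ?\<phi>' x = \<phi> x"
    using \<open>w \<notin> V\<close> by auto
  have finV: "finite V" and finE: "finite E"
    using sg simple_graph_finite_edges unfolding simple_graph_def by auto
  have "{v, w} \<notin> E"
    using \<open>w \<notin> V\<close> simple_graph_edges_subset_Pow[OF sg] by auto
  then have card_sum: "int (card (insert w V) + card (insert {v, w} E)) = n + 2"
    using finV finE \<open>w \<notin> V\<close> unfolding n_def by simp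
  have nodes: "node_labels (insert w V) ?\<phi>' = insert (n + 2) (node_labels V \<phi>)"
    using \<open>w \<notin> V\<close> by (rule node_labels_insert_fresh)
  have edges: "edge_labels (insert {v, w} E) ?\<phi>' = insert (n + 1) (edge_labels E \<phi>)"
    using edge_labels_add_pendant_edge[OF sg \<open>v \<in> V\<close> \<open>w \<notin> V\<close>] \<open>\<phi> v = 1\<close> \<open>n \<ge> 0\<close> by simp
  have NL: "node_labels V \<phi> \<subseteq> {1..n}" and EL: "edge_labels E \<phi> \<subseteq> {1..n}"
    using total_labeling_labels_bounded[OF tl] unfolding n_def by auto
  have "n + 1 \<notin> edge_labels E \<phi>" and "n + 2 \<notin> \<phi> ` V"
    using NL EL unfolding node_labels_def by auto
  have "finite (edge_labels E \<phi>)"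
    by (rule finite_subset[OF EL]) simp
  show ?thesis
    unfolding total_labeling_def nodes edges card_sum
  proof (intro conjI)
    show "\<forall>x\<in>insert w V. 0 < ?\<phi>' x"
      using tl agree \<open>n \<ge> 0\<close> unfolding total_labeling_def by simp
    have "inj_on \<phi> V"
      using tl unfolding total_labeling_def by simp
    then show "inj_on ?\<phi>' (insert w V)"
      using \<open>n + 2 \<notin> \<phi> ` V\<close> \<open>w \<notin> V\<close> by (rule inj_on_fun_upd_insert)
    show "card (insert (n + 1) (edge_labels E \<phi>)) = card (insert {v, w} E)"
      using tl finE \<open>{v, w} \<notin> E\<close> \<open>finite (edge_labels E \<phi>)\<close> \<open>n + 1 \<notin> edge_labels E \<phi>\<close>
      unfolding total_labeling_def by simp
    show "insert (n + 2) (node_labels V \<phi>) \<inter> insert (n + 1) (edge_labels E \<phi>) = {}"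
      using tl NL EL unfolding total_labeling_def by fastforce
    show "insert (n + 2) (node_labels V \<phi>) \<union> insert (n + 1) (edge_labels E \<phi>) = {1..n + 2}"
      using tl \<open>n \<ge> 0\<close> unfolding total_labeling_def n_def by auto
  qed
qed

lemma total_labeling_rename_by_labels:
  assumes sg: "simple_graph V E" and tl: "total_labeling V E \<phi>"
  obtains V' :: "nat set" and E' where "simple_graph V' E'" "total_labeling V' E' int"
    "int ` V' = node_labels V \<phi>" "card V' = card V" "card E' = card E"
proof
  let ?f = "\<lambda>x. nat (\<phi> x)"
  have agree: "\<forall>x\<in>V. int (?f x) = \<phi> x"
    using tl unfolding total_labeling_def by auto
  then have inj: "inj_on ?f V"
    using tl unfolding total_labeling_def inj_on_def by metis
  show "simple_graph (?f ` V) (image ?f ` E)"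
    using sg inj by (rule simple_graph_image)
  show "total_labeling (?f ` V) (image ?f ` E) int"
    using sg inj agree tl by (rule total_labeling_image)
  show "int ` ?f ` V = node_labels V \<phi>"
    using agree unfolding node_labels_def image_image by simp
  show "card (?f ` V) = card V"
    using inj by (rule card_image)
  show "card (image ?f ` E) = card E"
    using inj_on_subset[OF inj_on_image_Pow[OF inj] simple_graph_edges_subset_Pow[OF sg]]
    by (rule card_image)
qed

lemma total_labeling_int_add_pendant_edge:
  fixes V :: "nat set"
  assumes sg: "simple_graph V E" and tl: "total_labeling V E int" and "1 \<in> V"
  defines "w \<equiv> card V + card E + 2"
  shows "simple_graph (insert w V) (insert {1, w} E)"
    and "total_labeling (insert w V) (insert {1, w} E) int"
    and "card (insert w V) = card V + 1" and "card (insert {1, w} E) = card E + 1"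
proof -
  have "w \<notin> V"
    using total_labeling_labels_bounded(1)[OF tl] unfolding w_def node_labels_def by force
  then show "simple_graph (insert w V) (insert {1, w} E)"
    using sg \<open>1 \<in> V\<close> by (intro simple_graph_add_edge)
  have "int(w := int (card V + card E) + 2) = int"
    unfolding w_def by (simp add: fun_upd_idem_iff)
  then show "total_labeling (insert w V) (insert {1, w} E) int"
    using total_labeling_add_pendant_edge[OF sg tl \<open>1 \<in> V\<close> _ \<open>w \<notin> V\<close>] by simp
  show "card (insert w V) = card V + 1"
    using sg \<open>w \<notin> V\<close> unfolding simple_graph_def by simp
  have "{1, w} \<notin> E"
    using \<open>w \<notin> V\<close> simple_graph_edges_subset_Pow[OF sg] by auto
  then show "card (insert {1, w} E) = card E + 1"
    using simple_graph_finite_edges[OF sg] by simp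
qed

lemma total_labeling_int_grow:
  fixes V :: "nat set"
  assumes "simple_graph V E" and "total_labeling V E int" and "1 \<in> V"
  shows "\<exists>V' E'. simple_graph V' E' \<and> total_labeling V' E' int \<and> 1 \<in> V'
    \<and> card V' = card V + t \<and> card E' = card E + t"
proof (induction t)
  case 0
  then show ?case
    using assms by auto
next
  case (Suc t)
  then obtain V' E' where G: "simple_graph V' E'" "total_labeling V' E' int" "1 \<in> V'"
    and "card V' = card V + t" "card E' = card E + t"
    by blast
  let ?w = "card V' + card E' + 2"
  have "simple_graph (insert ?w V') (insert {1, ?w} E')
      \<and> total_labeling (insert ?w V') (insert {1, ?w} E') int \<and> 1 \<in> insert ?w V'
      \<and> card (insert ?w V') = card V + Suc t \<and> card (insert {1, ?w} E') = card E + Suc t"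
    using total_labeling_int_add_pendant_edge[OF G] G(3)
      \<open>card V' = card V + t\<close> \<open>card E' = card E + t\<close>
    by simp
  then show ?case
    by blast
qed

theorem theorem8p5:
  fixes V :: "'a set" and E :: "'a set set" and \<phi> :: "'a \<Rightarrow> int" and t :: nat
  assumes "simple_graph V E"
    and "total_labeling V E \<phi>"
    and "1 \<in> node_labels V \<phi>"
  shows "\<exists>(V' :: nat set) (E' :: nat set set).
           supergraceful V' E' \<and> card V' = card V + t \<and> card E' = card E + t"
proof -
  obtain V0 :: "nat set" and E0 where "simple_graph V0 E0" "total_labeling V0 E0 int"
    "int ` V0 = node_labels V \<phi>" "card V0 = card V" "card E0 = card E"
    using assms(1,2) by (rule total_labeling_rename_by_labels)
  moreover have "1 \<in> V0"
    using assms(3) \<open>int ` V0 = node_labels V \<phi>\<close> by force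
  ultimately show ?thesis
    using total_labeling_int_grow[of V0 E0 t] unfolding supergraceful_def by metis
qed

end
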